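(* Given the values of two fields, say $u$ and $v$, in three points $\mathfrak{z}_0$, $\mathfrak{z}_1=\mathfrak{z}_0+1$ and $\mathfrak{z}_2=\mathfrak{z}_0+\omega$, the equations of the $fgh$--system determine uniquely the values of $u$ and $v$ in the point $\mathfrak{z}_3=\mathfrak{z}_0+1+\omega$: \begin{equation} u_3-u_0=(u_1-u_0)\frac{v_1-v_0}{v_1-v_2}+(u_2-u_0)\frac{v_2-v_0}{v_2-v_1}, \end{equation} \begin{equation} v_3-v_1=(v_1-v_0)\frac{u_1-u_0}{u_0-u_3}\quad \Leftrightarrow\quad v_3-v_2=(v_2-v_0)\frac{u_2-u_0}{u_0-u_3}. \end{equation}
   Context: On the regular triangular lattice with vertices $k+\ell\omega+m\omega^2$ ($\omega=e^{2\pi i/3}$), the $fgh$--system for functions $u,v$ on the vertices (with $f=u(\mathfrak{z}_2)-u(\mathfrak{z}_1)$, $g=v(\mathfrak{z}_2)-v(\mathfrak{z}_1)$ on each positively oriented edge $(\mathfrak{z}_1,\mathfrak{z}_2)$, i.e. $\mathfrak{z}_2-\mathfrak{z}_1\in\{1,\omega,\omega^2\}$) amounts to the equation \[ \frac{u(\mathfrak{z}_2)-u(\mathfrak{z}_1)}{u(\mathfrak{z}_3)-u(\mathfrak{z}_2)}=\frac{v(\mathfrak{z}_3)-v(\mathfrak{z}_2)}{v(\mathfrak{z}_1)-v(\mathfrak{z}_3)} \] for every elementary triangle whose consecutive vertices $\mathfrak{z}_1,\mathfrak{z}_2,\mathfrak{z}_3$ satisfy $\mathfrak{z}_2-\mathfrak{z}_1,\mathfrak{z}_3-\mathfrak{z}_2,\mathfrak{z}_1-\mathfrak{z}_3\in\{1,\omega,\omega^2\}$.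 Notation $u_j=u(\mathfrak{z}_j)$, $v_j=v(\mathfrak{z}_j)$. *)

theory Defs
  imports Complex_Main
begin

definition omega :: complex where
  "omega = cis (2 * pi / 3)"

definition tri_lattice :: "complex set" where
  "tri_lattice = {of_int k + of_int l * omega + of_int m * omega ^ 2 | k l m. True}"

text \<open>The fgh-equation on an elementary triangle with consecutive vertices za, zb, zc
  (in the roles of z_1, z_2, z_3 of the defining equation).\<close>
definition fgh_eq :: "(complex \<Rightarrow> complex) \<Rightarrow> (complex \<Rightarrow> complex) \<Rightarrow> complex \<Rightarrow> complex \<Rightarrow> complex \<Rightarrow> bool" where
  "fgh_eq u v za zb zc \<longleftrightarrow>
     (u zb - u za) / (u zc - u zb) = (v zc - v zb) / (v za - v zc)"

end

theory Submission
  imports Defs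
begin

text \<open>Each of the fgh-equations on the triangles (z3, z0, z1) and (z3, z0, z2) is linear
  in v3 and can be solved for it. The two solutions agree exactly when their difference, an
  equation linear in u3, holds, and that equation is the formula for u3.\<close>

lemma fgh_ratio_iff_v_update:
  fixes u0 ua u3 v0 va v3 :: "'a::field"
  assumes "ua \<noteq> u0" "u3 \<noteq> u0" "v3 \<noteq> va"
  shows "(u0 - u3) / (ua - u0) = (va - v0) / (v3 - va) \<longleftrightarrow>
         v3 - va = (va - v0) * ((ua - u0) / (u0 - u3))"
  using assms by (simp add: field_simps)

lemma v_update_iff_u_formula:
  fixes u0 ua ub u3 v0 va vb v3 :: "'a::field"
  assumes "u3 \<noteq> u0" "va \<noteq> vb"
    and update_a: "v3 - va = (va - v0) * ((ua - u0) / (u0 - u3))"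
  shows "v3 - vb = (vb - v0) * ((ub - u0) / (u0 - u3)) \<longleftrightarrow>
         u3 - u0 = (ua - u0) * ((va - v0) / (va - vb)) + (ub - u0) * ((vb - v0) / (vb - va))"
proof -
  have "u0 - u3 \<noteq> 0" "va - vb \<noteq> 0"
    using assms(1,2) by auto
  have cross_a: "(v3 - va) * (u0 - u3) = (va - v0) * (ua - u0)"
    using update_a \<open>u0 - u3 \<noteq> 0\<close> by (simp add: field_simps)
  have cross_b: "v3 - vb = (vb - v0) * ((ub - u0) / (u0 - u3)) \<longleftrightarrow>
      (v3 - vb) * (u0 - u3) = (vb - v0) * (ub - u0)"
    using \<open>u0 - u3 \<noteq> 0\<close> by (simp add: field_simps)
  have "a * (b / D) + c * (e / - D) = (a * b - c * e) / D" for a b c e D :: 'a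
    by (simp add: diff_divide_distrib)
  from this [of "ua - u0" "va - v0" "va - vb" "ub - u0" "vb - v0"]
  have sum_u: "(ua - u0) * ((va - v0) / (va - vb)) + (ub - u0) * ((vb - v0) / (vb - va))
      = ((ua - u0) * (va - v0) - (ub - u0) * (vb - v0)) / (va - vb)"
    by simp
  have cross_u: "u3 - u0 = (ua - u0) * ((va - v0) / (va - vb)) + (ub - u0) * ((vb - v0) / (vb - va))
      \<longleftrightarrow> (u3 - u0) * (va - vb) = (ua - u0) * (va - v0) - (ub - u0) * (vb - v0)"
    unfolding sum_u using \<open>va - vb \<noteq> 0\<close> by (simp add: eq_divide_eq)
  \<comment> \<open>subtracting the a-equation from the b-equation leaves minus the u-equation\<close>
  have "(v3 - vb) * (u0 - u3) - (vb - v0) * (ub - u0)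
      = - ((u3 - u0) * (va - vb) - ((ua - u0) * (va - v0) - (ub - u0) * (vb - v0)))"
    using cross_a by algebra
  then show ?thesis
    unfolding cross_b cross_u by (metis eq_iff_diff_eq_0 neg_equal_0_iff_equal)
qed

theorem lemma8:
  fixes u v :: "complex \<Rightarrow> complex" and z0 :: complex
  assumes "z0 \<in> tri_lattice"
    and "distinct [u z0, u (z0 + 1), u (z0 + omega), u (z0 + 1 + omega)]"
    and "distinct [v z0, v (z0 + 1), v (z0 + omega), v (z0 + 1 + omega)]"
  shows "let z1 = z0 + 1; z2 = z0 + omega; z3 = z0 + 1 + omega;
             u0 = u z0; u1 = u z1; u2 = u z2; u3 = u z3;
             v0 = v z0; v1 = v z1; v2 = v z2; v3 = v z3;
             eqs = (fgh_eq u v z3 z0 z1 \<and> fgh_eq u v z3 z0 z2);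
             uform = (u3 - u0 = (u1 - u0) * ((v1 - v0) / (v1 - v2))
                                + (u2 - u0) * ((v2 - v0) / (v2 - v1)));
             vform1 = (v3 - v1 = (v1 - v0) * ((u1 - u0) / (u0 - u3)));
             vform2 = (v3 - v2 = (v2 - v0) * ((u2 - u0) / (u0 - u3)))
         in (eqs \<longleftrightarrow> uform \<and> vform1) \<and> (eqs \<longleftrightarrow> uform \<and> vform2)"
proof -
  define u0 u1 u2 u3 where "u0 = u z0" "u1 = u (z0 + 1)" "u2 = u (z0 + omega)"
    "u3 = u (z0 + 1 + omega)"
  define v0 v1 v2 v3 where "v0 = v z0" "v1 = v (z0 + 1)" "v2 = v (z0 + omega)"
    "v3 = v (z0 + 1 + omega)"
  have u_distinct: "u1 \<noteq> u0" "u2 \<noteq> u0" "u3 \<noteq> u0"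
    and v_distinct: "v3 \<noteq> v1" "v3 \<noteq> v2" "v1 \<noteq> v2"
    using assms(2,3) unfolding u0_u1_u2_u3_def v0_v1_v2_v3_def by auto
  let ?uform = "u3 - u0 = (u1 - u0) * ((v1 - v0) / (v1 - v2)) + (u2 - u0) * ((v2 - v0) / (v2 - v1))"
  let ?vform1 = "v3 - v1 = (v1 - v0) * ((u1 - u0) / (u0 - u3))"
  let ?vform2 = "v3 - v2 = (v2 - v0) * ((u2 - u0) / (u0 - u3))"
  have eqs: "fgh_eq u v (z0 + 1 + omega) z0 (z0 + 1) \<and> fgh_eq u v (z0 + 1 + omega) z0 (z0 + omega)
      \<longleftrightarrow> ?vform1 \<and> ?vform2"
    unfolding fgh_eq_def u0_u1_u2_u3_def [symmetric] v0_v1_v2_v3_def [symmetric]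
    using u_distinct v_distinct by (simp add: fgh_ratio_iff_v_update)
  have "?vform1 \<Longrightarrow> ?vform2 \<longleftrightarrow> ?uform"
    using v_update_iff_u_formula[of u3 u0 v1 v2 v3 v0 u1 u2] u_distinct v_distinct by simp
  moreover have "?vform2 \<Longrightarrow> ?vform1 \<longleftrightarrow> ?uform"
    using v_update_iff_u_formula[of u3 u0 v2 v1 v3 v0 u2 u1] u_distinct v_distinct
    by (simp add: add.commute)
  ultimately show ?thesis
    unfolding Let_def eqs u0_u1_u2_u3_def [symmetric] v0_v1_v2_v3_def [symmetric] by blast
qed

end
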